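(* Let $P(Y)\in R[Y]$ be an $m$-triangular polynomial of degree $d$ and $Q(Y)\in R[Y]$ an $n$-triangular polynomial of degree $e$. Then: (1) if $d=e$ and $m=n$, then $P(Y)+Q(Y)$ is $m$-triangular; (2) $P(Y)Q(Y)$ is $(m+n)$-triangular.
   Context: Fix a positive integer $a$ and variables $u_0,\ldots,u_a$. Let $R=\mathbb{C}[u_0,\ldots,u_{a-1}][u_a,u_a^{-1}]$. $\mathbb{Q}_+$ denotes the positive rational numbers. For an integer $m\ge1$, a polynomial $P(Y)=\sum_{l=0}^dp_lY^l\in R[Y]$ of degree $d\ge a$ is called $m$-triangular if for every $l$ with $d-a\le l\le d$ one has $p_l=q_lu_a^{m-1}u_{a-d+l}+P_l(u_{a-d+l+1},\ldots,u_a)$ for some $q_l\in\mathbb{Q}_+$ and some polynomial $P_l\in\mathbb{C}[u_{a-d+l+1},\ldots,u_a]$ (for $l=d$ this means $p_d=q_du_a^m$). *)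

theory Defs
  imports Complex_Main "HOL-Library.Poly_Mapping" "HOL-Computational_Algebra.Polynomial"
begin

text \<open>Laurent polynomials over the complex numbers in variables u_0, u_1, ...:
  finitely supported maps from integer exponent vectors (nat =>0 int) to complex.
  The ring R = C[u_0,...,u_(a-1)][u_a, u_a^-1] is the subring of those elements whose
  monomials only involve u_0..u_a, with nonnegative exponents of u_0..u_(a-1).\<close>

type_synonym monom = "nat \<Rightarrow>\<^sub>0 int"
type_synonym laurent = "monom \<Rightarrow>\<^sub>0 complex"

definition uvar :: "nat \<Rightarrow> laurent" where
  "uvar i = Poly_Mapping.single (Poly_Mapping.single i 1) 1"

definition cconst :: "complex \<Rightarrow> laurent" where
  "cconst c = Poly_Mapping.single 0 c"

definition in_R :: "nat \<Rightarrow> laurent \<Rightarrow> bool" where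
  "in_R a f \<longleftrightarrow> (\<forall>mo::monom. mo \<in> Poly_Mapping.keys f \<longrightarrow> Poly_Mapping.keys mo \<subseteq> {0..a} \<and> (\<forall>i<a. Poly_Mapping.lookup mo i \<ge> 0))"

definition in_poly_vars :: "nat set \<Rightarrow> laurent \<Rightarrow> bool" where
  "in_poly_vars S f \<longleftrightarrow> (\<forall>mo::monom. mo \<in> Poly_Mapping.keys f \<longrightarrow> Poly_Mapping.keys mo \<subseteq> S \<and> (\<forall>i. Poly_Mapping.lookup mo i \<ge> 0))"

text \<open>m-triangular polynomials in R[Y] (with a fixed). Index a-d+l is written l+a-d
  (well-defined in nat since l \<ge> d-a).\<close>
definition triangular :: "nat \<Rightarrow> nat \<Rightarrow> laurent poly \<Rightarrow> bool" where
  "triangular a m P \<longleftrightarrow>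
     m \<ge> 1 \<and> (\<forall>l. in_R a (coeff P l)) \<and> degree P \<ge> a \<and>
     (\<exists>q::rat. q > 0 \<and> coeff P (degree P) = cconst (of_rat q) * uvar a ^ m) \<and>
     (\<forall>l. degree P - a \<le> l \<and> l < degree P \<longrightarrow>
        (\<exists>q::rat. \<exists>Pl. q > 0 \<and> in_poly_vars {l + a - degree P + 1..a} Pl \<and>
           coeff P l = cconst (of_rat q) * uvar a ^ (m - 1) * uvar (l + a - degree P) + Pl))"

end

theory Submission imports Defs begin

text \<open>Write \<open>S\<^sub>k = {a+1-k..a}\<close> for \<open>1 \<le> k \<le> a\<close>. Modulo polynomials in the variables
  \<open>u\<^sub>i, i \<in> S\<^sub>k\<close>, the coefficient of \<open>Y\<^sup>d\<^sup>-\<^sup>k\<close> of an \<open>m\<close>-triangular \<open>P\<close> is a positive rational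
  multiple of \<open>u\<^sub>a\<^sup>m\<^sup>-\<^sup>1 u\<^sub>a\<^sub>-\<^sub>k\<close>, while every coefficient of higher degree is such a polynomial
  (this uses \<open>u\<^sub>a\<close>, \<open>k \<ge> 1\<close>). In \<open>P Q\<close> the coefficient of \<open>Y\<^sup>d\<^sup>+\<^sup>e\<^sup>-\<^sup>k\<close> is therefore, modulo
  the same ring, a sum of products which are either zero, lie in the ring, or are one of
  \<open>p\<^sub>d\<^sub>-\<^sub>k q\<^sub>e\<close>, \<open>p\<^sub>d q\<^sub>e\<^sub>-\<^sub>k\<close>, both positive multiples of \<open>u\<^sub>a\<^sup>m\<^sup>+\<^sup>n\<^sup>-\<^sup>1 u\<^sub>a\<^sub>-\<^sub>k\<close>. Sums are the same
  computation with one term per coefficient.\<close>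

definition in_laurent_subring :: "nat set \<Rightarrow> nat set \<Rightarrow> laurent \<Rightarrow> bool" where
  "in_laurent_subring S N f \<longleftrightarrow>
     (\<forall>mo \<in> Poly_Mapping.keys f. Poly_Mapping.keys mo \<subseteq> S \<and> (\<forall>i\<in>N. Poly_Mapping.lookup mo i \<ge> 0))"

lemma in_R_iff_in_laurent_subring: "in_R a f \<longleftrightarrow> in_laurent_subring {0..a} {..<a} f"
  unfolding in_R_def in_laurent_subring_def by auto

lemma in_poly_vars_iff_in_laurent_subring: "in_poly_vars S f \<longleftrightarrow> in_laurent_subring S UNIV f"
  unfolding in_poly_vars_def in_laurent_subring_def by auto

lemma in_laurent_subring_add:
  assumes "in_laurent_subring S N f" "in_laurent_subring S N g"
  shows "in_laurent_subring S N (f + g)"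
  using assms keys_add[of f g] unfolding in_laurent_subring_def by blast

lemma in_laurent_subring_mult:
  assumes f: "in_laurent_subring S N f" and g: "in_laurent_subring S N g"
  shows "in_laurent_subring S N (f * g)"
  unfolding in_laurent_subring_def
proof
  fix mo assume "mo \<in> Poly_Mapping.keys (f * g)"
  then obtain x y where xy: "mo = x + y" "x \<in> Poly_Mapping.keys f" "y \<in> Poly_Mapping.keys g"
    using keys_mult[of f g] by blast
  with f g have "Poly_Mapping.keys x \<subseteq> S" "Poly_Mapping.keys y \<subseteq> S"
    "\<forall>i\<in>N. 0 \<le> Poly_Mapping.lookup x i" "\<forall>i\<in>N. 0 \<le> Poly_Mapping.lookup y i"
    unfolding in_laurent_subring_def by auto
  with xy(1) show "Poly_Mapping.keys mo \<subseteq> S \<and> (\<forall>i\<in>N. 0 \<le> Poly_Mapping.lookup mo i)"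
    using keys_add[of x y] by (auto simp: lookup_add)
qed

lemma in_laurent_subring_zero [simp]: "in_laurent_subring S N 0"
  by (simp add: in_laurent_subring_def)

lemma in_laurent_subring_one [simp]: "in_laurent_subring S N 1"
  by (simp add: in_laurent_subring_def)

lemma in_laurent_subring_cconst [simp]: "in_laurent_subring S N (cconst c)"
  by (simp add: in_laurent_subring_def cconst_def)

lemma in_laurent_subring_uvar: "i \<in> S \<Longrightarrow> in_laurent_subring S N (uvar i)"
  by (simp add: in_laurent_subring_def uvar_def)

lemma in_laurent_subring_power: "in_laurent_subring S N f \<Longrightarrow> in_laurent_subring S N (f ^ k)"
  by (induction k) (auto intro: in_laurent_subring_mult)

lemma in_laurent_subring_sum:
  "(\<And>i. i \<in> A \<Longrightarrow> in_laurent_subring S N (f i)) \<Longrightarrow> in_laurent_subring S N (sum f A)"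
  by (induction A rule: infinite_finite_induct) (auto intro: in_laurent_subring_add)

lemma in_laurent_subring_mono: "in_laurent_subring S N f \<Longrightarrow> S \<subseteq> S' \<Longrightarrow> in_laurent_subring S' N f"
  unfolding in_laurent_subring_def by blast

lemma cconst_add: "cconst (x + y) = cconst x + cconst y"
  by (simp add: cconst_def single_add)

lemma cconst_mult: "cconst (x * y) = cconst x * cconst y"
  by (simp add: cconst_def mult_single)

lemma cconst_zero [simp]: "cconst 0 = 0"
  by (simp add: cconst_def)

lemma uvar_power: "uvar i ^ k = Poly_Mapping.single (Poly_Mapping.single i (int k)) 1"
  by (induction k) (auto simp: uvar_def mult_single single_add[symmetric] add.commute)

lemma cconst_mult_uvar_power_neq_zero: "c \<noteq> 0 \<Longrightarrow> cconst c * uvar i ^ k \<noteq> 0"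
  by (simp add: uvar_power cconst_def mult_single) (metis lookup_single_eq lookup_zero)

definition mult_mod_poly_vars :: "nat set \<Rightarrow> laurent \<Rightarrow> rat \<Rightarrow> laurent \<Rightarrow> bool" where
  "mult_mod_poly_vars S U q c \<longleftrightarrow> (\<exists>T. in_poly_vars S T \<and> c = cconst (of_rat q) * U + T)"

lemma mult_mod_poly_vars_zero: "in_poly_vars S c \<Longrightarrow> mult_mod_poly_vars S U 0 c"
  by (simp add: mult_mod_poly_vars_def)

lemma mult_mod_poly_vars_add:
  assumes "mult_mod_poly_vars S U q c" "mult_mod_poly_vars S U r d"
  shows "mult_mod_poly_vars S U (q + r) (c + d)"
proof -
  obtain T T' where "in_poly_vars S T" "c = cconst (of_rat q) * U + T"
      "in_poly_vars S T'" "d = cconst (of_rat r) * U + T'"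
    using assms unfolding mult_mod_poly_vars_def by blast
  then show ?thesis
    unfolding mult_mod_poly_vars_def in_poly_vars_iff_in_laurent_subring
    by (intro exI[of _ "T + T'"]) (auto intro: in_laurent_subring_add
        simp: of_rat_add cconst_add algebra_simps)
qed

lemma mult_mod_poly_vars_mult:
  assumes "mult_mod_poly_vars S U q c" and W: "in_poly_vars S W"
  shows "mult_mod_poly_vars S (U * W) (q * r) (c * (cconst (of_rat r) * W))"
proof -
  obtain T where T: "in_poly_vars S T" "c = cconst (of_rat q) * U + T"
    using assms(1) unfolding mult_mod_poly_vars_def by blast
  have "in_poly_vars S (T * (cconst (of_rat r) * W))"
    using T(1) W unfolding in_poly_vars_iff_in_laurent_subring
    by (intro in_laurent_subring_mult) auto
  with T(2) show ?thesis
    unfolding mult_mod_poly_vars_def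
    by (intro exI[of _ "T * (cconst (of_rat r) * W)"]) (simp add: of_rat_mult cconst_mult algebra_simps)
qed

lemma mult_mod_poly_vars_sum_nonneg:
  "(\<And>i. i \<in> A \<Longrightarrow> \<exists>r\<ge>0. mult_mod_poly_vars S U r (f i)) \<Longrightarrow>
   \<exists>r\<ge>0. mult_mod_poly_vars S U r (sum f A)"
proof (induction A rule: infinite_finite_induct)
  case (infinite A)
  have "mult_mod_poly_vars S U 0 0" by (simp add: mult_mod_poly_vars_zero in_poly_vars_def)
  with infinite.hyps show ?case by auto
next
  case empty
  have "mult_mod_poly_vars S U 0 0" by (simp add: mult_mod_poly_vars_zero in_poly_vars_def)
  then show ?case by auto
next
  case (insert x A)
  obtain r where "r \<ge> 0" "mult_mod_poly_vars S U r (f x)"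
    using insert.prems by blast
  moreover obtain r' where "r' \<ge> 0" "mult_mod_poly_vars S U r' (sum f A)"
    using insert.IH insert.prems by blast
  ultimately have "0 \<le> r + r'" "mult_mod_poly_vars S U (r + r') (f x + sum f A)"
    by (simp_all add: mult_mod_poly_vars_add)
  then show ?case
    using insert.hyps by auto
qed

lemma mult_mod_poly_vars_sum_pos:
  assumes "finite A" "j \<in> A" "\<exists>r>0. mult_mod_poly_vars S U r (f j)"
    and "\<And>i. i \<in> A - {j} \<Longrightarrow> \<exists>r\<ge>0. mult_mod_poly_vars S U r (f i)"
  shows "\<exists>r>0. mult_mod_poly_vars S U r (sum f A)"
proof -
  obtain r where r: "r > 0" "mult_mod_poly_vars S U r (f j)"
    using assms(3) by auto
  have "\<exists>r'\<ge>0. mult_mod_poly_vars S U r' (sum f (A - {j}))"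
    using assms(4) by (rule mult_mod_poly_vars_sum_nonneg)
  then obtain r' where r': "r' \<ge> 0" "mult_mod_poly_vars S U r' (sum f (A - {j}))"
    by auto
  have "mult_mod_poly_vars S U (r + r') (f j + sum f (A - {j}))"
    using r(2) r'(2) by (rule mult_mod_poly_vars_add)
  moreover have "0 < r + r'" using r(1) r'(1) by simp
  ultimately show ?thesis unfolding sum.remove[OF assms(1,2)] by blast
qed

lemma triangular_in_R: "triangular a m P \<Longrightarrow> in_R a (coeff P l)"
  unfolding triangular_def by blast

lemma triangular_degree_ge: "triangular a m P \<Longrightarrow> a \<le> degree P"
  unfolding triangular_def by blast

lemma triangular_lead_coeff:
  "triangular a m P \<Longrightarrow> \<exists>q>0. coeff P (degree P) = cconst (of_rat q) * uvar a ^ m"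
  unfolding triangular_def by blast

lemma triangular_lower_coeff:
  assumes P: "triangular a m P" and k: "1 \<le> k" "k \<le> a"
  shows "\<exists>q>0. mult_mod_poly_vars {a+1-k..a} (uvar a ^ (m - 1) * uvar (a - k)) q
                 (coeff P (degree P - k))"
proof -
  define l where "l = degree P - k"
  have d: "a \<le> degree P" using P by (rule triangular_degree_ge)
  then have "degree P - a \<le> l" "l < degree P" using k by (auto simp: l_def)
  then obtain q T where "q > 0" "in_poly_vars {l + a - degree P + 1..a} T"
      "coeff P l = cconst (of_rat q) * uvar a ^ (m - 1) * uvar (l + a - degree P) + T"
    using P unfolding triangular_def by blast
  moreover have "l + a - degree P = a - k" "a - k + 1 = a + 1 - k"
    using d k by (auto simp: l_def)
  ultimately show ?thesis
    unfolding mult_mod_poly_vars_def l_def by (auto simp: mult.assoc)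
qed

lemma triangular_intro:
  assumes "m \<ge> 1" "\<And>l. in_R a (coeff P l)" "a \<le> degree P"
    and "\<exists>q>0. coeff P (degree P) = cconst (of_rat q) * uvar a ^ m"
    and lower: "\<And>k. 1 \<le> k \<Longrightarrow> k \<le> a \<Longrightarrow>
      \<exists>q>0. mult_mod_poly_vars {a+1-k..a} (uvar a ^ (m - 1) * uvar (a - k)) q (coeff P (degree P - k))"
  shows "triangular a m P"
  unfolding triangular_def
proof (intro conjI allI impI)
  fix l assume l: "degree P - a \<le> l \<and> l < degree P"
  define k where "k = degree P - l"
  have k: "1 \<le> k" "k \<le> a" "l = degree P - k" "l + a - degree P = a - k" "a - k + 1 = a + 1 - k"
    using l assms(3) by (auto simp: k_def)
  show "\<exists>q Pl. 0 < q \<and> in_poly_vars {l + a - degree P + 1..a} Pl \<and>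
      coeff P l = cconst (of_rat q) * uvar a ^ (m - 1) * uvar (l + a - degree P) + Pl"
    using lower[OF k(1,2)] unfolding mult_mod_poly_vars_def k(4,5)
    by (auto simp: k(3)[symmetric] mult.assoc)
qed (use assms in auto)

text \<open>For \<open>d - k < i < d\<close> the coefficient is \<open>q u\<^sub>a\<^sup>m\<^sup>-\<^sup>1 u\<^sub>a\<^sub>-\<^sub>j + (poly in S\<^sub>j)\<close> with \<open>j = d - i < k\<close>,
  so \<open>a - j \<in> S\<^sub>k\<close> and \<open>S\<^sub>j \<subseteq> S\<^sub>k\<close>.\<close>
lemma triangular_upper_coeff:
  assumes P: "triangular a m P" and "k \<le> a" "degree P - k < i"
  shows "in_poly_vars {a+1-k..a} (coeff P i)"
proof -
  have d: "a \<le> degree P" using P by (rule triangular_degree_ge)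
  consider "degree P < i" | "i = degree P" | "i < degree P" by linarith
  then show ?thesis
  proof cases
    case 1
    then show ?thesis by (simp add: coeff_eq_0 in_poly_vars_def)
  next
    case 2
    with assms d have "a \<in> {a+1-k..a}" by auto
    then show ?thesis
      using triangular_lead_coeff[OF P] 2 unfolding in_poly_vars_iff_in_laurent_subring
      by (auto intro!: in_laurent_subring_mult in_laurent_subring_power in_laurent_subring_uvar)
  next
    case 3
    define j where "j = degree P - i"
    have j: "1 \<le> j" "j \<le> a" "i = degree P - j" using 3 assms d by (auto simp: j_def)
    obtain q T where T: "in_poly_vars {a+1-j..a} T"
        "coeff P i = cconst (of_rat q) * (uvar a ^ (m - 1) * uvar (a - j)) + T"
      using triangular_lower_coeff[OF P j(1,2)] unfolding mult_mod_poly_vars_def j(3) by blast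
    have "{a+1-j..a} \<subseteq> {a+1-k..a}" "a - j \<in> {a+1-k..a}" "a \<in> {a+1-k..a}"
      using assms j by auto
    with T show ?thesis unfolding in_poly_vars_iff_in_laurent_subring
      by (auto intro!: in_laurent_subring_add in_laurent_subring_mult in_laurent_subring_power
          in_laurent_subring_uvar elim: in_laurent_subring_mono)
  qed
qed

lemma triangular_lower_times_lead:
  assumes P: "triangular a m P" and Q: "triangular a n Q" and k: "1 \<le> k" "k \<le> a"
  shows "\<exists>q>0. mult_mod_poly_vars {a+1-k..a} (uvar a ^ (m + n - 1) * uvar (a - k)) q
                 (coeff P (degree P - k) * coeff Q (degree Q))"
proof -
  obtain q where q: "q > 0"
      "mult_mod_poly_vars {a+1-k..a} (uvar a ^ (m - 1) * uvar (a - k)) q (coeff P (degree P - k))"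
    using triangular_lower_coeff[OF P k] by blast
  obtain r where r: "r > 0" "coeff Q (degree Q) = cconst (of_rat r) * uvar a ^ n"
    using triangular_lead_coeff[OF Q] by blast
  have "in_poly_vars {a+1-k..a} (uvar a ^ n)"
    using k unfolding in_poly_vars_iff_in_laurent_subring
    by (intro in_laurent_subring_power in_laurent_subring_uvar) auto
  moreover have "uvar a ^ (m - 1) * uvar (a - k) * uvar a ^ n = uvar a ^ (m + n - 1) * uvar (a - k)"
    using P by (simp add: triangular_def power_add[symmetric] algebra_simps)
  ultimately show ?thesis
    using mult_mod_poly_vars_mult[OF q(2), of "uvar a ^ n" r] q(1) r by (metis mult_pos_pos)
qed

lemma degree_eq_of_coeff_monomial:
  fixes p :: "laurent poly"
  assumes "degree p \<le> d" "coeff p d = cconst (of_rat q) * uvar i ^ k" "q \<noteq> 0"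
  shows "degree p = d"
proof -
  have "of_rat q \<noteq> (0 :: complex)" using assms(3) by simp
  then have "coeff p d \<noteq> 0"
    unfolding assms(2) by (rule cconst_mult_uvar_power_neq_zero)
  with assms(1) show ?thesis by (simp add: le_degree antisym)
qed

lemma triangular_mult_lead_coeff:
  assumes "triangular a m P" "triangular a n Q"
  shows "\<exists>q>0. coeff (P * Q) (degree P + degree Q) = cconst (of_rat q) * uvar a ^ (m + n)"
proof -
  obtain q r where "q > 0" "coeff P (degree P) = cconst (of_rat q) * uvar a ^ m"
      "r > 0" "coeff Q (degree Q) = cconst (of_rat r) * uvar a ^ n"
    using assms by (blast dest: triangular_lead_coeff)
  then show ?thesis
    unfolding coeff_mult_degree_sum
    by (intro exI[of _ "q * r"]) (simp add: of_rat_mult cconst_mult power_add algebra_simps)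
qed

lemma degree_mult_triangular:
  assumes "triangular a m P" "triangular a n Q"
  shows "degree (P * Q) = degree P + degree Q"
  using triangular_mult_lead_coeff[OF assms] degree_mult_le[of P Q]
  by (auto intro: degree_eq_of_coeff_monomial)

lemma triangular_coeff_product_mod:
  assumes P: "triangular a m P" and Q: "triangular a n Q" and k: "1 \<le> k" "k \<le> a"
    and i: "i \<noteq> degree P - k"
  shows "\<exists>r\<ge>0. mult_mod_poly_vars {a+1-k..a} (uvar a ^ (m + n - 1) * uvar (a - k)) r
                 (coeff P i * coeff Q (degree P + degree Q - k - i))"
proof -
  define d e where "d = degree P" and "e = degree Q"
  have de: "a \<le> d" "a \<le> e" using P Q by (auto simp: d_def e_def triangular_degree_ge)
  consider "i < d - k \<or> d < i" | "i = d" | "d - k < i" "i < d" using i d_def by force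
  then show ?thesis
  proof cases
    case 1
    then have "coeff P i * coeff Q (d + e - k - i) = 0"
      using de k by (auto simp: coeff_eq_0 d_def e_def)
    then show ?thesis
      by (metis mult_mod_poly_vars_zero in_laurent_subring_zero in_poly_vars_iff_in_laurent_subring
          order.refl d_def e_def)
  next
    case 2
    then have "coeff P i * coeff Q (d + e - k - i) = coeff Q (e - k) * coeff P d"
      using de k by simp
    then show ?thesis
      using triangular_lower_times_lead[OF Q P k]
      by (auto simp: d_def e_def add.commute intro: less_imp_le)
  next
    case 3
    then have "e - k < d + e - k - i" using de k by simp
    then have "in_poly_vars {a+1-k..a} (coeff P i * coeff Q (d + e - k - i))"
      using 3 triangular_upper_coeff[OF P k(2)] triangular_upper_coeff[OF Q k(2)]
      unfolding in_poly_vars_iff_in_laurent_subring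
      by (auto simp: d_def e_def intro: in_laurent_subring_mult)
    then show ?thesis by (auto simp: d_def e_def intro: mult_mod_poly_vars_zero)
  qed
qed

lemma coeff_mult_triangular_lower:
  assumes P: "triangular a m P" and Q: "triangular a n Q" and k: "1 \<le> k" "k \<le> a"
  shows "\<exists>q>0. mult_mod_poly_vars {a+1-k..a} (uvar a ^ (m + n - 1) * uvar (a - k)) q
                 (coeff (P * Q) (degree P + degree Q - k))"
proof -
  define l where "l = degree P + degree Q - k"
  have "degree P - k \<in> {..l}" "l - (degree P - k) = degree Q"
    using k triangular_degree_ge[OF P] triangular_degree_ge[OF Q] by (auto simp: l_def)
  then show ?thesis
    using triangular_lower_times_lead[OF P Q k] triangular_coeff_product_mod[OF P Q k]
    unfolding coeff_mult l_def[symmetric]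
    by (intro mult_mod_poly_vars_sum_pos[where f = "\<lambda>i. coeff P i * coeff Q (l - i)"])
      (auto simp: l_def)
qed

lemma triangular_mult:
  assumes P: "triangular a m P" and Q: "triangular a n Q"
  shows "triangular a (m + n) (P * Q)"
proof (rule triangular_intro, unfold degree_mult_triangular[OF P Q])
  show "1 \<le> m + n" using P by (simp add: triangular_def)
  show "a \<le> degree P + degree Q" using triangular_degree_ge[OF P] by simp
  show "in_R a (coeff (P * Q) l)" for l
    using triangular_in_R[OF P] triangular_in_R[OF Q]
    unfolding coeff_mult in_R_iff_in_laurent_subring
    by (intro in_laurent_subring_sum in_laurent_subring_mult)
  show "\<exists>q>0. coeff (P * Q) (degree P + degree Q) = cconst (of_rat q) * uvar a ^ (m + n)"
    using triangular_mult_lead_coeff[OF P Q] .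
  show "\<exists>q>0. mult_mod_poly_vars {a+1-k..a} (uvar a ^ (m + n - 1) * uvar (a - k)) q
          (coeff (P * Q) (degree P + degree Q - k))" if "1 \<le> k" "k \<le> a" for k
    using coeff_mult_triangular_lower[OF P Q that] .
qed

lemma triangular_add:
  assumes P: "triangular a m P" and Q: "triangular a m Q" and deg: "degree P = degree Q"
  shows "triangular a m (P + Q)"
proof -
  obtain q r where "q > 0" "coeff P (degree P) = cconst (of_rat q) * uvar a ^ m"
      "r > 0" "coeff Q (degree Q) = cconst (of_rat r) * uvar a ^ m"
    using P Q by (blast dest: triangular_lead_coeff)
  then have lead: "q + r > 0" "coeff (P + Q) (degree P) = cconst (of_rat (q + r)) * uvar a ^ m"
    using deg by (simp_all add: of_rat_add cconst_add algebra_simps)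
  have degree: "degree (P + Q) = degree P"
    using lead degree_add_le_max[of P Q] deg by (auto intro: degree_eq_of_coeff_monomial)
  show ?thesis
  proof (rule triangular_intro, unfold degree)
    show "in_R a (coeff (P + Q) l)" for l
      using triangular_in_R[OF P] triangular_in_R[OF Q]
      unfolding in_R_iff_in_laurent_subring by (simp add: in_laurent_subring_add)
    show "\<exists>q>0. mult_mod_poly_vars {a+1-k..a} (uvar a ^ (m - 1) * uvar (a - k)) q
            (coeff (P + Q) (degree P - k))" if "1 \<le> k" "k \<le> a" for k
      using triangular_lower_coeff[OF P that] triangular_lower_coeff[OF Q that] deg
      by (auto intro: mult_mod_poly_vars_add add_pos_pos)
  qed (use P lead in \<open>auto simp: triangular_def\<close>)
qed

theorem mainTheorem3:
  fixes a m n :: nat and P Q :: "laurent poly"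
  assumes "a > 0" and "m \<ge> 1" and "n \<ge> 1"
    and "triangular a m P" and "triangular a n Q"
  shows "(degree P = degree Q \<and> m = n \<longrightarrow> triangular a m (P + Q))
         \<and> triangular a (m + n) (P * Q)"
  using triangular_add[OF assms(4)] triangular_mult[OF assms(4,5)] assms(5) by blast

end
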